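(* Let $A$ be a countable subset of $\mathbb{R}^d$. Then there exists a lattice $D$ in $\mathbb{R}^d$ such that $D\cap\mathrm{span}_{\mathbb{Q}}(A)=\{0\}$ and $D^\circ\cap\mathrm{span}_{\mathbb{Q}}(A)=\{0\}$, where $D^\circ=\{x\in\mathbb{R}^d:\langle y,x\rangle\in\mathbb{Z}\text{ for all }y\in D\}$ is the dual lattice.
   Context: A lattice in $\mathbb{R}^d$ is a discrete cocompact subgroup. $\mathrm{span}_{\mathbb{Q}}(A)$ is the set of finite rational linear combinations of elements of $A$. *)

theory Defs
  imports "HOL-Analysis.Analysis"
begin

definition is_lattice :: "'a::euclidean_space set \<Rightarrow> bool" where
  "is_lattice D \<longleftrightarrow>
     0 \<in> D \<and> (\<forall>x\<in>D. \<forall>y\<in>D. x - y \<in> D) \<and>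
     (\<forall>x\<in>D. \<exists>e>0. \<forall>y\<in>D. dist y x < e \<longrightarrow> y = x) \<and>
     (\<exists>K. compact K \<and> (\<forall>x. \<exists>v\<in>D. \<exists>k\<in>K. x = v + k))"

definition span_Q :: "'a::euclidean_space set \<Rightarrow> 'a set" where
  "span_Q A = {x. \<exists>S c. finite S \<and> S \<subseteq> A \<and> (\<forall>a\<in>S. c a \<in> \<rat>) \<and>
                      x = (\<Sum>a\<in>S. c a *\<^sub>R a)}"

definition dual_lattice :: "'a::euclidean_space set \<Rightarrow> 'a set" where
  "dual_lattice D = {x. \<forall>y\<in>D. y \<bullet> x \<in> \<int>}"

end

theory Submission
  imports Defs
begin

text \<open>The lattice is a scaled copy \<open>t \<int>\<^sup>d\<close> of the integer lattice, whose dual is \<open>t\<^sup>-\<^sup>1 \<int>\<^sup>d\<close>.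
  Since \<open>span\<^sub>\<rat> A\<close> and \<open>\<int>\<^sup>d\<close> are countable and a nonzero vector \<open>z\<close> has at most one scalar
  multiple equal to a given \<open>s\<close>, only countably many \<open>c\<close> make \<open>c \<int>\<^sup>d\<close> meet \<open>span\<^sub>\<rat> A\<close>
  outside \<open>0\<close>. Any \<open>t > 0\<close> avoiding these \<open>c\<close> and their inverses works.\<close>

definition integer_lattice :: "'a::euclidean_space set" where
  "integer_lattice = {x. \<forall>b\<in>Basis. x \<bullet> b \<in> \<int>}"

lemma countable_integer_lattice: "countable (integer_lattice :: 'a::euclidean_space set)"
proof -
  have "(integer_lattice :: 'a set) \<subseteq> (\<lambda>f. \<Sum>b\<in>Basis. f b *\<^sub>R b) ` (Basis \<rightarrow>\<^sub>E \<int>)"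
  proof
    fix x :: 'a assume "x \<in> integer_lattice"
    then have "restrict (\<lambda>b. x \<bullet> b) Basis \<in> Basis \<rightarrow>\<^sub>E \<int>"
      by (auto simp: integer_lattice_def)
    moreover have "x = (\<Sum>b\<in>Basis. restrict (\<lambda>b. x \<bullet> b) Basis b *\<^sub>R b)"
      by (simp add: euclidean_representation)
    ultimately show "x \<in> (\<lambda>f. \<Sum>b\<in>Basis. f b *\<^sub>R b) ` (Basis \<rightarrow>\<^sub>E \<int>)"
      by blast
  qed
  moreover have "countable ((Basis :: 'a set) \<rightarrow>\<^sub>E (\<int> :: real set))"
    by (intro countable_PiE finite_Basis countable_int)
  ultimately show ?thesis
    by (blast intro: countable_subset)
qed

lemma is_lattice_integer_lattice: "is_lattice (integer_lattice :: 'a::euclidean_space set)"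
  unfolding is_lattice_def
proof (intro conjI ballI exI[of _ 1] exI[of _ "cbox 0 One"] allI impI)
  show "0 \<in> (integer_lattice :: 'a set)"
    by (simp add: integer_lattice_def)
  show "x - y \<in> integer_lattice" if "x \<in> integer_lattice" "y \<in> integer_lattice" for x y :: 'a
    using that by (auto simp: integer_lattice_def inner_diff_left)
  show "y = x" if "x \<in> integer_lattice" "y \<in> integer_lattice" "dist y x < 1" for x y :: 'a
  proof (rule ccontr)
    assume "y \<noteq> x"
    then obtain b where b: "b \<in> Basis" "(y - x) \<bullet> b \<noteq> 0"
      using euclidean_all_zero_iff by (metis right_minus_eq)
    moreover have "(y - x) \<bullet> b \<in> \<int>"
      using that b by (auto simp: integer_lattice_def inner_diff_left)
    ultimately have "1 \<le> \<bar>(y - x) \<bullet> b\<bar>"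
      using Ints_nonzero_abs_ge1 by blast
    also have "\<dots> \<le> dist y x"
      using Basis_le_norm[OF b(1)] by (simp add: dist_norm)
    finally show False
      using that(3) by simp
  qed
  show "\<exists>v\<in>integer_lattice. \<exists>k\<in>cbox 0 One. x = v + k" for x :: 'a
  proof (intro bexI)
    define v :: 'a where "v = (\<Sum>b\<in>Basis. of_int \<lfloor>x \<bullet> b\<rfloor> *\<^sub>R b)"
    have v_coord: "v \<bullet> b = of_int \<lfloor>x \<bullet> b\<rfloor>" if "b \<in> Basis" for b
      using that by (simp add: v_def inner_sum_left inner_Basis if_distrib cong: if_cong)
    show "v \<in> integer_lattice"
      by (simp add: integer_lattice_def v_coord)
    show "x - v \<in> cbox 0 One"
      by (auto simp: mem_box inner_diff_left v_coord) linarith+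
  qed simp
qed simp_all

lemma dual_lattice_integer_lattice:
  "dual_lattice integer_lattice = (integer_lattice :: 'a::euclidean_space set)"
proof (intro equalityI subsetI)
  fix x :: 'a assume "x \<in> dual_lattice integer_lattice"
  moreover have "b \<in> integer_lattice" if "b \<in> Basis" for b :: 'a
    using that by (simp add: integer_lattice_def inner_Basis)
  ultimately show "x \<in> integer_lattice"
    by (auto simp: dual_lattice_def integer_lattice_def inner_commute)
next
  fix x :: 'a assume "x \<in> integer_lattice"
  then show "x \<in> dual_lattice integer_lattice"
    unfolding dual_lattice_def integer_lattice_def
    by (auto simp: euclidean_inner[of _ x] intro!: Ints_sum Ints_mult)
qed

lemma is_lattice_scaleR:
  fixes D :: "'a::euclidean_space set"
  assumes "c \<noteq> 0" and "is_lattice D"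
  shows "is_lattice ((*\<^sub>R) c ` D)"
proof -
  from \<open>is_lattice D\<close> obtain K where
      zero: "0 \<in> D" and diff: "\<And>x y. x \<in> D \<Longrightarrow> y \<in> D \<Longrightarrow> x - y \<in> D"
    and discrete: "\<And>x. x \<in> D \<Longrightarrow> \<exists>e>0. \<forall>y\<in>D. dist y x < e \<longrightarrow> y = x"
    and "compact K" and cover: "\<And>x. \<exists>v\<in>D. \<exists>k\<in>K. x = v + k"
    unfolding is_lattice_def by blast
  have "\<exists>e>0. \<forall>y\<in>(*\<^sub>R) c ` D. dist y (c *\<^sub>R x) < e \<longrightarrow> y = c *\<^sub>R x" if x: "x \<in> D" for x
  proof -
    obtain e where "e > 0" and e: "\<forall>y\<in>D. dist y x < e \<longrightarrow> y = x"
      using discrete[OF x] by blast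
    have "dist (c *\<^sub>R y) (c *\<^sub>R x) = \<bar>c\<bar> * dist y x" for y
      by (simp add: dist_norm flip: scaleR_diff_right)
    then show ?thesis
      using \<open>e > 0\<close> \<open>c \<noteq> 0\<close> e by (intro exI[of _ "\<bar>c\<bar> * e"]) auto
  qed
  moreover have "\<exists>v\<in>(*\<^sub>R) c ` D. \<exists>k\<in>(*\<^sub>R) c ` K. x = v + k" for x
  proof -
    obtain v k where "v \<in> D" "k \<in> K" "inverse c *\<^sub>R x = v + k"
      using cover by blast
    then have "x = c *\<^sub>R v + c *\<^sub>R k"
      using \<open>c \<noteq> 0\<close> by (metis scaleR_right_distrib scaleR_scaleR right_inverse scaleR_one)
    with \<open>v \<in> D\<close> \<open>k \<in> K\<close> show ?thesis
      by blast
  qed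
  moreover have "c *\<^sub>R x - c *\<^sub>R y \<in> (*\<^sub>R) c ` D" if "x \<in> D" "y \<in> D" for x y
    using diff[OF that] by (metis scaleR_diff_right image_eqI)
  moreover have "0 \<in> (*\<^sub>R) c ` D"
    using zero by (metis image_eqI scaleR_zero_right)
  moreover have "compact ((*\<^sub>R) c ` K)"
    using \<open>compact K\<close> by (rule compact_scaling)
  ultimately show ?thesis
    unfolding is_lattice_def by blast
qed

lemma dual_lattice_scaleR:
  fixes D :: "'a::euclidean_space set"
  assumes "c \<noteq> 0"
  shows "dual_lattice ((*\<^sub>R) c ` D) = (*\<^sub>R) (inverse c) ` dual_lattice D"
proof -
  have dual_iff: "y \<in> dual_lattice ((*\<^sub>R) c ` D) \<longleftrightarrow> c *\<^sub>R y \<in> dual_lattice D" for y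
    by (simp add: dual_lattice_def)
  show ?thesis
  proof (intro set_eqI iffI)
    fix y assume "y \<in> dual_lattice ((*\<^sub>R) c ` D)"
    then show "y \<in> (*\<^sub>R) (inverse c) ` dual_lattice D"
      using assms by (intro image_eqI[of y _ "c *\<^sub>R y"]) (simp_all add: dual_iff)
  next
    fix y assume "y \<in> (*\<^sub>R) (inverse c) ` dual_lattice D"
    then show "y \<in> dual_lattice ((*\<^sub>R) c ` D)"
      using assms by (auto simp: dual_iff)
  qed
qed

lemma zero_in_span_Q: "0 \<in> span_Q A"
  unfolding span_Q_def by (intro CollectI exI[of _ "{}"]) simp

lemma countable_span_Q:
  assumes "countable A"
  shows "countable (span_Q A)"
proof -
  let ?combination = "\<lambda>(S, c). \<Sum>a\<in>S. c a *\<^sub>R a"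
  let ?coefficients = "SIGMA S:{S. finite S \<and> S \<subseteq> A}. S \<rightarrow>\<^sub>E \<rat>"
  have "span_Q A \<subseteq> ?combination ` ?coefficients"
  proof
    fix x assume "x \<in> span_Q A"
    then obtain S c where S: "finite S" "S \<subseteq> A" "\<forall>a\<in>S. c a \<in> \<rat>"
      and x: "x = (\<Sum>a\<in>S. c a *\<^sub>R a)"
      unfolding span_Q_def by blast
    have "x = ?combination (S, restrict c S)"
      unfolding x by (simp cong: sum.cong)
    moreover have "(S, restrict c S) \<in> ?coefficients"
      using S by simp
    ultimately show "x \<in> ?combination ` ?coefficients"
      by (rule image_eqI)
  qed
  moreover have "countable ?coefficients"
  proof (rule countable_SIGMA)
    show "countable {S. finite S \<and> S \<subseteq> A}"
      using assms by (rule countable_Collect_finite_subset)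
    show "countable (S \<rightarrow>\<^sub>E \<rat>)" if "S \<in> {S. finite S \<and> S \<subseteq> A}" for S
      using that countable_rat by (auto intro: countable_PiE)
  qed
  then have "countable (?combination ` ?coefficients)"
    by (rule countable_image)
  ultimately show ?thesis
    by (rule countable_subset)
qed

lemma countable_scalars_mapping_into:
  fixes Z S :: "'a::real_inner set"
  assumes "countable Z" and "countable S"
  shows "countable {c. \<exists>z\<in>Z - {0}. c *\<^sub>R z \<in> S}"
proof -
  let ?ratio = "\<lambda>(z, s). (s \<bullet> z) / (z \<bullet> z)"
  have "c \<in> ?ratio ` (Z \<times> S)" if "z \<in> Z - {0}" "c *\<^sub>R z \<in> S" for c z
    using that by (intro image_eqI[of c _ "(z, c *\<^sub>R z)"]) auto
  then have "{c. \<exists>z\<in>Z - {0}. c *\<^sub>R z \<in> S} \<subseteq> ?ratio ` (Z \<times> S)"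
    by blast
  moreover have "countable (?ratio ` (Z \<times> S))"
    using assms by (intro countable_image countable_SIGMA)
  ultimately show ?thesis
    by (rule countable_subset)
qed

theorem lemma6p1:
  fixes A :: "'a::euclidean_space set"
  assumes "countable A"
  shows "\<exists>D. is_lattice D \<and> D \<inter> span_Q A = {0} \<and> dual_lattice D \<inter> span_Q A = {0}"
proof -
  define Z where "Z = (integer_lattice :: 'a set)"
  define bad where "bad = {c. \<exists>z\<in>Z - {0}. c *\<^sub>R z \<in> span_Q A}"
  have "countable bad"
    unfolding bad_def Z_def
    by (intro countable_scalars_mapping_into countable_integer_lattice countable_span_Q assms)
  then have "countable (bad \<union> inverse ` bad)"
    by simp
  then have "\<not> {0<..<1} \<subseteq> bad \<union> inverse ` bad"
    using uncountable_open_interval[of "0::real" 1] countable_subset by auto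
  then obtain t :: real where "0 < t" "t \<notin> bad" "t \<notin> inverse ` bad"
    by (auto simp: subset_iff)
  then have "t \<noteq> 0" and t: "t \<notin> bad" "inverse t \<notin> bad"
    by (auto intro: image_eqI[of t inverse "inverse t"])
  have meets_trivially: "(*\<^sub>R) c ` Z \<inter> span_Q A = {0}" if "c \<notin> bad" for c
  proof -
    have "0 \<in> Z"
      by (simp add: Z_def integer_lattice_def)
    then show ?thesis
      using that zero_in_span_Q unfolding bad_def by (auto intro: image_eqI[of 0 _ 0])
  qed
  have "is_lattice ((*\<^sub>R) t ` Z)"
    unfolding Z_def using \<open>t \<noteq> 0\<close> is_lattice_integer_lattice by (rule is_lattice_scaleR)
  moreover have "dual_lattice ((*\<^sub>R) t ` Z) = (*\<^sub>R) (inverse t) ` Z"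
    unfolding Z_def using \<open>t \<noteq> 0\<close>
    by (simp add: dual_lattice_scaleR dual_lattice_integer_lattice)
  ultimately show ?thesis
    using meets_trivially[OF t(1)] meets_trivially[OF t(2)]
    by (intro exI[of _ "(*\<^sub>R) t ` Z"]) simp
qed

end
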